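(* Let $Q=(q_n)_{n\ge1}$ be a basic sequence that is infinite in limit. Then the set $\Theta_Q$ is nowhere dense.
   Context: A basic sequence is a sequence $Q=(q_n)_{n\ge1}$ of integers with $q_n\ge 2$; it is infinite in limit if $q_n\to\infty$. $\mathbb{N}$ denotes the positive integers. For each positive integer $j$ let $\nu_j=\min\{N : q_m\ge 2j^2 \text{ for all } m\ge N\}$. Define $l_1=\max(\nu_2-1,1)$ and, recursively for $i\ge 2$, $l_i=\max\big(\min\{k\in\mathbb{N} : l_1+2l_2+\cdots+(i-1)l_{i-1}+ik\ge \nu_{i+1}-1\},1\big)$. Put $L_i=\sum_{j=1}^i jl_j$ (with $L_0=0$). Let $S_Q=\{(a,b,c)\in\mathbb{N}^3 : b\le l_a,\ c\le a\}$ and $\phi_Q(a,b,c)=L_{a-1}+(b-1)a+c$; $\phi_Q$ is a bijection $S_Q\to\mathbb{N}$. A $Q$-special sequence is a family of integers $F=(F_{(a,b,c)})_{(a,b,c)\in S_Q}$ with $F_{(a,b,1)}=0$ for all $(a,b,1)\in S_Q$ and $\frac{F_{(a,b,c)}}{q_{\phi_Q(a,b,c)}}\in\left[\frac{c-1}{a}-\frac{1}{2a^2},\frac{c-1}{a}+\frac{1}{2a^2}\right]$ for $(a,b,c)\in S_Q$ with $c>1$. Let $\Gamma_Q$ be the set of $Q$-special sequences. For $F\in\Gamma_Q$ put $E_{F,n}=F_{\phi_Q^{-1}(n)}$ and $x_F=\sum_{n=1}^\infty \frac{E_{F,n}}{q_1q_2\cdots q_n}$. Define $\Theta_Q=\{x_F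 : F\in\Gamma_Q\}\subseteq[0,1)$. *)

theory Defs
  imports "HOL-Analysis.Analysis"
begin

text \<open>A sequence Q = (q_n)_{n>=1} is represented as q :: nat => int; the value q 0 is ignored.\<close>

definition basic_seq :: "(nat \<Rightarrow> int) \<Rightarrow> bool" where
  "basic_seq q \<longleftrightarrow> (\<forall>n\<ge>1. q n \<ge> 2)"

definition infinite_in_limit :: "(nat \<Rightarrow> int) \<Rightarrow> bool" where
  "infinite_in_limit q \<longleftrightarrow> filterlim q at_top sequentially"

definition nuQ :: "(nat \<Rightarrow> int) \<Rightarrow> nat \<Rightarrow> nat" where
  "nuQ q j = (LEAST N. N \<ge> 1 \<and> (\<forall>m\<ge>N. q m \<ge> 2 * (int j)^2))"

definition lstep :: "(nat \<Rightarrow> int) \<Rightarrow> nat \<Rightarrow> nat \<Rightarrow> nat" where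
  "lstep q i Lprev =
     (if i = 1 then max (nuQ q 2 - 1) 1
      else max (LEAST k. k \<ge> 1 \<and> Lprev + i * k \<ge> nuQ q (i+1) - 1) 1)"

fun LQ :: "(nat \<Rightarrow> int) \<Rightarrow> nat \<Rightarrow> nat" where
  "LQ q 0 = 0"
| "LQ q (Suc i) = LQ q i + Suc i * lstep q (Suc i) (LQ q i)"

definition lQ :: "(nat \<Rightarrow> int) \<Rightarrow> nat \<Rightarrow> nat" where
  "lQ q i = lstep q i (LQ q (i - 1))"

definition SQ :: "(nat \<Rightarrow> int) \<Rightarrow> (nat \<times> nat \<times> nat) set" where
  "SQ q = {(a, b, c). a \<ge> 1 \<and> b \<ge> 1 \<and> c \<ge> 1 \<and> b \<le> lQ q a \<and> c \<le> a}"

definition phiQ :: "(nat \<Rightarrow> int) \<Rightarrow> nat \<times> nat \<times> nat \<Rightarrow> nat" where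
  "phiQ q = (\<lambda>(a, b, c). LQ q (a - 1) + (b - 1) * a + c)"

text \<open>Q-special sequences: integer families indexed by S_Q (values outside S_Q are irrelevant).\<close>
definition special_seq :: "(nat \<Rightarrow> int) \<Rightarrow> (nat \<times> nat \<times> nat \<Rightarrow> int) \<Rightarrow> bool" where
  "special_seq q F \<longleftrightarrow>
     (\<forall>a b. (a, b, 1) \<in> SQ q \<longrightarrow> F (a, b, 1) = 0) \<and>
     (\<forall>a b c. (a, b, c) \<in> SQ q \<and> c > 1 \<longrightarrow>
        real_of_int (F (a, b, c)) / real_of_int (q (phiQ q (a, b, c)))
          \<in> {(real c - 1) / real a - 1 / (2 * (real a)^2) ..
             (real c - 1) / real a + 1 / (2 * (real a)^2)})"

definition GammaQ :: "(nat \<Rightarrow> int) \<Rightarrow> (nat \<times> nat \<times> nat \<Rightarrow> int) set" where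
  "GammaQ q = {F. special_seq q F}"

definition EQ :: "(nat \<Rightarrow> int) \<Rightarrow> (nat \<times> nat \<times> nat \<Rightarrow> int) \<Rightarrow> nat \<Rightarrow> int" where
  "EQ q F n = F (the_inv_into (SQ q) (phiQ q) n)"

definition xQ :: "(nat \<Rightarrow> int) \<Rightarrow> (nat \<times> nat \<times> nat \<Rightarrow> int) \<Rightarrow> real" where
  "xQ q F = (\<Sum>n. real_of_int (EQ q F (Suc n)) / (\<Prod>k=1..Suc n. real_of_int (q k)))"

definition ThetaQ :: "(nat \<Rightarrow> int) \<Rightarrow> real set" where
  "ThetaQ q = xQ q ` GammaQ q"

definition nowhere_dense :: "real set \<Rightarrow> bool" where
  "nowhere_dense A \<longleftrightarrow> interior (closure A) = {}"

end

theory Submission imports Defs begin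

text \<open>Every Q-special sequence has digit 0 at the first position L_{a-1} + 1 of each block a,
  and all its digits are admissible Cantor digits 0 \<le> E_n < q_n. Multiplying x_F by
  P = q_1 \<cdots> q_m with m = L_{a-1}, the integer part collects the digits up to m and the
  fractional part is the tail, which starts with a zero digit and is therefore at most
  1/q_{m+1} \<le> 1/2. So on the grid of mesh 1/P the set \<Theta>_Q misses the upper half of
  every cell; as P is unbounded, every interval contains such a gap, and \<Theta>_Q is
  nowhere dense.\<close>

lemma basic_seq_ge_2: "basic_seq q \<Longrightarrow> 1 \<le> n \<Longrightarrow> 2 \<le> q n"
  by (simp add: basic_seq_def)

lemma lQ_ge_1: "1 \<le> lQ q a"
  by (simp add: lQ_def lstep_def)

lemma LQ_Suc_lQ: "LQ q (Suc i) = LQ q i + Suc i * lQ q (Suc i)"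
  by (simp add: lQ_def)

declare LQ.simps(2) [simp del]

lemma strict_mono_LQ: "strict_mono (LQ q)"
proof (rule strict_monoI_Suc)
  fix i
  show "LQ q i < LQ q (Suc i)"
    using lQ_ge_1[of q "Suc i"] by (simp add: LQ_Suc_lQ)
qed

lemma le_LQ: "n \<le> LQ q n"
  using strict_mono_LQ by (rule strict_mono_imp_increasing)

lemma phiQ_in_block:
  assumes "(a, b, c) \<in> SQ q"
  shows "LQ q (a - 1) < phiQ q (a, b, c)" "phiQ q (a, b, c) \<le> LQ q a"
proof -
  from assms have a: "1 \<le> a" "1 \<le> b" "1 \<le> c" "b \<le> lQ q a" "c \<le> a"
    by (auto simp: SQ_def)
  then have "(b - 1) * a + c \<le> (lQ q a - 1) * a + a"
    by (intro add_mono mult_le_mono1) auto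
  also have "\<dots> = a * lQ q a"
    using lQ_ge_1[of q a] by (simp add: algebra_simps diff_mult_distrib)
  finally show "phiQ q (a, b, c) \<le> LQ q a"
    using a LQ_Suc_lQ[of q "a - 1"] by (simp add: phiQ_def)
  show "LQ q (a - 1) < phiQ q (a, b, c)"
    using a by (simp add: phiQ_def)
qed

lemma block_index_unique:
  assumes "1 \<le> a" "LQ q (a - 1) < n" "n \<le> LQ q a"
    and "1 \<le> a'" "LQ q (a' - 1) < n" "n \<le> LQ q a'"
  shows "a = a'"
proof -
  have "\<not> a < a'" if "1 \<le> a" "n \<le> LQ q a" "LQ q (a' - 1) < n" for a a'
    using that strict_mono_less_eq[OF strict_mono_LQ[of q], of a "a' - 1"] by auto
  with assms show ?thesis
    by (meson linorder_neqE_nat)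
qed

lemma inj_on_phiQ: "inj_on (phiQ q) (SQ q)"
proof (rule inj_onI)
  fix x y
  assume x: "x \<in> SQ q" and y: "y \<in> SQ q" and eq: "phiQ q x = phiQ q y"
  obtain a b c a' b' c' where xy: "x = (a, b, c)" "y = (a', b', c')"
    by (metis prod_cases3)
  have a: "1 \<le> a" "1 \<le> c" "c \<le> a" "1 \<le> a'" "1 \<le> b" "1 \<le> b'" "1 \<le> c'" "c' \<le> a'"
    using x y by (auto simp: SQ_def xy)
  have "a = a'"
    using block_index_unique a phiQ_in_block x y eq unfolding xy by metis
  then have rest: "(c - 1) + (b - 1) * a = (c' - 1) + (b' - 1) * a"
    using eq a by (simp add: phiQ_def xy)
  have digits: "(d + k * a) div a = k" "(d + k * a) mod a = d" if "d < a" for d k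
    using that by simp_all
  have "c - 1 < a" "c' - 1 < a"
    using a \<open>a = a'\<close> by auto
  then have "b - 1 = b' - 1" "c - 1 = c' - 1"
    using digits rest by metis+
  with a \<open>a = a'\<close> show "x = y"
    by (auto simp: xy)
qed

lemma phiQ_surj:
  assumes "1 \<le> n"
  shows "n \<in> phiQ q ` SQ q"
proof -
  obtain k where k: "\<not> n \<le> LQ q k" "n \<le> LQ q (Suc k)"
    using ex_least_nat_less[of "\<lambda>a. n \<le> LQ q a" n] le_LQ[of n q] assms by auto
  define a where "a = Suc k"
  define r where "r = n - LQ q k - 1"
  have "r < a * lQ q a"
    using k LQ_Suc_lQ[of q k] by (simp add: r_def a_def)
  then have "r div a < lQ q a"
    by (simp add: a_def div_less_iff_less_mult mult.commute)
  then have mem: "(a, r div a + 1, r mod a + 1) \<in> SQ q"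
    by (auto simp: SQ_def a_def Suc_leI)
  have "phiQ q (a, r div a + 1, r mod a + 1) = LQ q k + r + 1"
    using div_mult_mod_eq[of r a] by (simp add: phiQ_def a_def)
  also have "\<dots> = n"
    using k by (simp add: r_def)
  finally show ?thesis
    using mem by (metis image_eqI)
qed

lemma EQ_phiQ: "x \<in> SQ q \<Longrightarrow> EQ q F (phiQ q x) = F x"
  by (simp add: EQ_def the_inv_into_f_f[OF inj_on_phiQ])

lemma EQ_block_start:
  assumes "special_seq q F" "1 \<le> a"
  shows "EQ q F (Suc (LQ q (a - 1))) = 0"
proof -
  have "(a, 1, 1) \<in> SQ q"
    using assms(2) lQ_ge_1[of q a] by (simp add: SQ_def)
  moreover have "phiQ q (a, 1, 1) = Suc (LQ q (a - 1))"
    by (simp add: phiQ_def)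
  ultimately show ?thesis
    using assms(1) EQ_phiQ by (metis special_seq_def)
qed

lemma special_interval_subset_unit:
  fixes a c :: real
  assumes "2 \<le> c" "c \<le> a"
  shows "{(c - 1) / a - 1 / (2 * a^2) .. (c - 1) / a + 1 / (2 * a^2)} \<subseteq> {0<..<1}"
proof -
  have "1 / (2 * a^2) < 1 / a"
    using assms by (simp add: divide_simps power2_eq_square)
  moreover have "1 / a \<le> (c - 1) / a" "(c - 1) / a \<le> 1 - 1 / a"
    using assms by (simp_all add: divide_simps)
  ultimately show ?thesis
    by auto
qed

lemma EQ_digit_bounds:
  assumes q: "basic_seq q" and F: "special_seq q F" and n: "1 \<le> n"
  shows "0 \<le> EQ q F n" "EQ q F n < q n"
proof -
  obtain a b c where abc: "(a, b, c) \<in> SQ q" "phiQ q (a, b, c) = n"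
    using phiQ_surj[OF n, of q] by auto
  have E: "EQ q F n = F (a, b, c)"
    using EQ_phiQ[OF abc(1)] abc(2) by simp
  have qn: "2 \<le> q n"
    using basic_seq_ge_2[OF q n] .
  have "0 \<le> F (a, b, c) \<and> F (a, b, c) < q n"
  proof (cases "c = 1")
    case True
    then show ?thesis
      using F abc qn by (simp add: special_seq_def)
  next
    case False
    with abc(1) have "2 \<le> real c" "real c \<le> real a"
      by (auto simp: SQ_def)
    moreover have "real_of_int (F (a, b, c)) / real_of_int (q n)
        \<in> {(real c - 1) / real a - 1 / (2 * (real a)^2) .. (real c - 1) / real a + 1 / (2 * (real a)^2)}"
      using F abc False by (auto simp: special_seq_def SQ_def)
    ultimately have "real_of_int (F (a, b, c)) / real_of_int (q n) \<in> {0<..<1}"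
      using special_interval_subset_unit by blast
    then show ?thesis
      using qn by (simp add: divide_simps)
  qed
  with E show "0 \<le> EQ q F n" "EQ q F n < q n"
    by simp_all
qed

definition cantor_prod :: "(nat \<Rightarrow> int) \<Rightarrow> nat \<Rightarrow> real" where
  "cantor_prod q n = (\<Prod>k=1..n. real_of_int (q k))"

definition cantor_series :: "(nat \<Rightarrow> int) \<Rightarrow> (nat \<Rightarrow> int) \<Rightarrow> real" where
  "cantor_series q E = (\<Sum>n. real_of_int (E (Suc n)) / cantor_prod q (Suc n))"

lemma xQ_eq_cantor_series: "xQ q F = cantor_series q (EQ q F)"
  by (simp add: xQ_def cantor_series_def cantor_prod_def)

lemma cantor_prod_0 [simp]: "cantor_prod q 0 = 1"
  by (simp add: cantor_prod_def)

lemma cantor_prod_Suc: "cantor_prod q (Suc n) = cantor_prod q n * real_of_int (q (Suc n))"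
  by (simp add: cantor_prod_def prod.nat_ivl_Suc' mult.commute)

lemma cantor_prod_ge_power:
  assumes "basic_seq q"
  shows "2 ^ n \<le> cantor_prod q n"
proof (induction n)
  case (Suc n)
  have "2 \<le> real_of_int (q (Suc n))"
    using basic_seq_ge_2[OF assms, of "Suc n"] by simp
  with Suc have "2 ^ n * 2 \<le> cantor_prod q n * real_of_int (q (Suc n))"
    using order_trans[OF zero_le_power[of "2::real" n] Suc] by (intro mult_mono) auto
  then show ?case
    by (simp add: cantor_prod_Suc mult.commute)
qed simp

lemma cantor_prod_pos: "basic_seq q \<Longrightarrow> 0 < cantor_prod q n"
  by (rule less_le_trans[OF _ cantor_prod_ge_power]) simp_all

lemma telescoping_summable_le:
  fixes d g :: "nat \<Rightarrow> real"
  assumes "\<And>i. 0 \<le> d i" "\<And>i. d i \<le> g i - g (Suc i)" "\<And>i. 0 \<le> g i"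
  shows "summable d" "suminf d \<le> g 0"
proof -
  have partial: "(\<Sum>i<n. d i) \<le> g 0" for n
  proof -
    have "(\<Sum>i<n. d i) \<le> (\<Sum>i<n. g i - g (Suc i))"
      by (rule sum_mono) (rule assms(2))
    also have "\<dots> = g 0 - g n"
      by (rule sum_lessThan_telescope')
    finally show ?thesis
      using assms(3)[of n] by linarith
  qed
  show "summable d"
    using summableI_nonneg_bounded assms(1) partial by blast
  then show "suminf d \<le> g 0"
    using suminf_le_const partial by blast
qed

lemma cantor_term_le_diff:
  assumes "basic_seq q" "E (Suc i) < q (Suc i)"
  shows "real_of_int (E (Suc i)) / cantor_prod q (Suc i)
    \<le> 1 / cantor_prod q i - 1 / cantor_prod q (Suc i)"
proof -
  define P where "P = cantor_prod q i"
  define Q where "Q = real_of_int (q (Suc i))"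
  have "0 < P" "2 \<le> Q"
    using cantor_prod_pos[OF assms(1)] basic_seq_ge_2[OF assms(1), of "Suc i"] by (auto simp: P_def Q_def)
  moreover have "real_of_int (E (Suc i)) \<le> Q - 1"
    using assms(2) by (simp add: Q_def)
  ultimately have "real_of_int (E (Suc i)) / (P * Q) \<le> (Q - 1) / (P * Q)"
    by (simp add: divide_right_mono)
  also have "\<dots> = 1 / P - 1 / (P * Q)"
    using \<open>0 < P\<close> \<open>2 \<le> Q\<close> by (simp add: field_simps)
  finally show ?thesis
    by (simp add: P_def Q_def cantor_prod_Suc)
qed

lemma cantor_partial_sum_Ints:
  assumes "basic_seq q"
  shows "(\<Sum>i<m. real_of_int (E (Suc i)) / cantor_prod q (Suc i)) * cantor_prod q m \<in> \<int>"
proof (induction m)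
  case (Suc m)
  have "(\<Sum>i<Suc m. real_of_int (E (Suc i)) / cantor_prod q (Suc i)) * cantor_prod q (Suc m)
      = (\<Sum>i<m. real_of_int (E (Suc i)) / cantor_prod q (Suc i)) * cantor_prod q m * q (Suc m)
        + E (Suc m)"
    using cantor_prod_pos[OF assms, of m] basic_seq_ge_2[OF assms, of "Suc m"]
    by (simp add: cantor_prod_Suc algebra_simps)
  with Suc show ?case
    by simp
qed simp

lemma frac_cantor_series_le:
  assumes q: "basic_seq q"
    and digits: "\<And>n. 1 \<le> n \<Longrightarrow> 0 \<le> E n \<and> E n < q n"
    and zero: "E (Suc m) = 0"
  shows "frac (cantor_series q E * cantor_prod q m) \<le> 1 / q (Suc m)"
proof -
  define d where "d i = real_of_int (E (Suc i)) / cantor_prod q (Suc i)" for i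
  define g where "g i = 1 / cantor_prod q i" for i
  have d_nonneg: "0 \<le> d i" for i
    using digits[of "Suc i"] cantor_prod_pos[OF q, of "Suc i"] by (simp add: d_def)
  have d_le: "d i \<le> g i - g (Suc i)" for i
    using cantor_term_le_diff[OF q] digits[of "Suc i"] by (simp add: d_def g_def)
  have g_nonneg: "0 \<le> g i" for i
    using cantor_prod_pos[OF q, of i] by (simp add: g_def)
  define T where "T = (\<Sum>i. d (i + Suc m))"
  have "summable (\<lambda>i. d (i + Suc m))" "T \<le> g (Suc m)"
    using telescoping_summable_le[of "\<lambda>i. d (i + Suc m)" "\<lambda>i. g (i + Suc m)"]
      d_nonneg d_le g_nonneg by (simp_all add: T_def)
  moreover have "summable d"
    using telescoping_summable_le(1) d_nonneg d_le g_nonneg by blast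
  ultimately have "0 \<le> T"
    using d_nonneg by (simp add: T_def suminf_nonneg)
  have "cantor_series q E = suminf d"
    by (simp add: cantor_series_def d_def[abs_def])
  also have "\<dots> = T + (\<Sum>i<Suc m. d i)"
    unfolding T_def by (rule suminf_split_initial_segment[OF \<open>summable d\<close>])
  also have "(\<Sum>i<Suc m. d i) = (\<Sum>i<m. d i)"
    using zero by (simp add: d_def)
  finally have x: "cantor_series q E * cantor_prod q m
      = T * cantor_prod q m + (\<Sum>i<m. d i) * cantor_prod q m"
    by (simp add: algebra_simps)
  have P: "0 < cantor_prod q m"
    using cantor_prod_pos[OF q] .
  have "T * cantor_prod q m \<le> g (Suc m) * cantor_prod q m"
    using \<open>T \<le> g (Suc m)\<close> P by (simp add: mult_right_mono)
  also have "\<dots> = 1 / q (Suc m)"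
    using P by (simp add: g_def cantor_prod_Suc)
  finally have upper: "T * cantor_prod q m \<le> 1 / q (Suc m)" .
  moreover have "1 / q (Suc m) < (1::real)"
    using basic_seq_ge_2[OF q, of "Suc m"] by simp
  ultimately have "frac (cantor_series q E * cantor_prod q m) = T * cantor_prod q m"
    using x cantor_partial_sum_Ints[OF q, of E m] \<open>0 \<le> T\<close> P
    by (simp add: frac_unique_iff d_def)
  with upper show ?thesis
    by simp
qed

lemma frac_ThetaQ_le:
  assumes q: "basic_seq q" and x: "x \<in> ThetaQ q" and a: "1 \<le> a"
  shows "frac (x * cantor_prod q (LQ q (a - 1))) \<le> 1 / 2"
proof -
  obtain F where F: "special_seq q F" and x_eq: "x = cantor_series q (EQ q F)"
    using x by (auto simp: ThetaQ_def GammaQ_def xQ_eq_cantor_series)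
  have "frac (x * cantor_prod q (LQ q (a - 1))) \<le> 1 / q (Suc (LQ q (a - 1)))"
    unfolding x_eq
    using frac_cantor_series_le[OF q] EQ_digit_bounds[OF q F] EQ_block_start[OF F a] by blast
  also have "\<dots> \<le> 1 / 2"
    using basic_seq_ge_2[OF q, of "Suc (LQ q (a - 1))"] by simp
  finally show ?thesis .
qed

lemma nowhere_dense_if_frac_gaps:
  fixes A :: "real set" and r :: real
  assumes r: "0 \<le> r" "r < 1"
    and gaps: "\<And>e. 0 < e \<Longrightarrow> \<exists>P. 1 / e < P \<and> (\<forall>x\<in>A. frac (x * P) \<le> r)"
  shows "nowhere_dense A"
proof -
  have "y \<notin> interior (closure A)" for y
  proof
    assume "y \<in> interior (closure A)"
    then obtain e where e: "0 < e" "ball y e \<subseteq> closure A"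
      using mem_interior by blast
    then obtain P where P: "1 / e < P" and frac_le: "\<And>x. x \<in> A \<Longrightarrow> frac (x * P) \<le> r"
      using gaps by blast
    have "0 < P"
      using e(1) P by (simp add: less_trans[OF _ P])
    then have "1 / P < e"
      using e(1) P by (simp add: field_simps)
    define k where "k = \<lfloor>(y - e) * P\<rfloor> + 1"
    define U where "U = {(k + r) / P <..< (k + 1) / P}"
    have "U \<subseteq> ball y e"
    proof
      fix z
      assume "z \<in> U"
      then have "k + r < z * P" "z * P < k + 1"
        using \<open>0 < P\<close> by (auto simp: U_def field_simps)
      moreover have "(y - e) * P < k" "k \<le> (y - e) * P + 1"
        unfolding k_def by linarith+
      ultimately have "(y - e) * P < z * P" "z * P < (y - e + 2 / P) * P"
        using \<open>0 < P\<close> r(1) by (auto simp: algebra_simps)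
      then have "y - e < z" "z < y - e + 2 / P"
        using \<open>0 < P\<close> by (simp_all add: mult_less_cancel_right)
      then show "z \<in> ball y e"
        using \<open>1 / P < e\<close> by (auto simp: dist_real_def)
    qed
    moreover have "U \<inter> A = {}"
    proof -
      have "r < frac (z * P)" if "z \<in> U" for z
      proof -
        have "k + r < z * P" "z * P < k + 1"
          using that \<open>0 < P\<close> by (auto simp: U_def field_simps)
        then have "frac (z * P) = z * P - k"
          using r(1) by (simp add: frac_unique_iff)
        with \<open>k + r < z * P\<close> show ?thesis
          by simp
      qed
      then show ?thesis
        using frac_le by force
    qed
    then have "U \<inter> closure A = {}"
      by (simp add: U_def open_Int_closure_eq_empty)
    moreover have "U \<noteq> {}"
      using r(2) \<open>0 < P\<close> by (simp add: U_def divide_le_cancel)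
    ultimately show False
      using e(2) by blast
  qed
  then show ?thesis
    by (auto simp: nowhere_dense_def)
qed

theorem mainTheorem4:
  fixes q :: "nat \<Rightarrow> int"
  assumes "basic_seq q" and "infinite_in_limit q"
  shows "nowhere_dense (ThetaQ q)"
proof (rule nowhere_dense_if_frac_gaps[of "1 / 2"])
  fix e :: real
  assume "0 < e"
  obtain n where n: "1 / e < 2 ^ n"
    using real_arch_pow[of 2 "1 / e"] by auto
  have "(2::real) ^ n \<le> 2 ^ LQ q n"
    using le_LQ by (rule power_increasing) simp
  also have "\<dots> \<le> cantor_prod q (LQ q n)"
    using cantor_prod_ge_power[OF assms(1)] .
  finally have "1 / e < cantor_prod q (LQ q n)"
    using n by linarith
  moreover have "\<forall>x\<in>ThetaQ q. frac (x * cantor_prod q (LQ q n)) \<le> 1 / 2"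
    using frac_ThetaQ_le[OF assms(1), of _ "Suc n"] by simp
  ultimately show "\<exists>P. 1 / e < P \<and> (\<forall>x\<in>ThetaQ q. frac (x * P) \<le> 1 / 2)"
    by blast
qed simp_all

end
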